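(* Let $r\in\mathbb N$ and let $M$ be the sub-add move matrix. Every vertex in $\mathcal P_0$ has no parent in $\Gamma_{M,\,2^r}$.
   Context: The sub-add move matrix is $M=\begin{pmatrix}1&-1\\1&1\end{pmatrix}$. For $n\in\mathbb N$, $\Gamma_{M,\,n}$ is the directed graph with vertex set $\mathbb Z_n^2$ and arcs $((a,b),(a-b,a+b))$ for all $(a,b)\in\mathbb Z_n^2$ (computed mod $n$). If $({\bf v},{\bf w})$ is an arc, ${\bf v}$ is a parent of ${\bf w}$. $\mathcal P_0$ is the set of $(x,y)\in\mathbb Z_{2^r}^2$ such that exactly one of $x,y$ is odd (parity of elements of $\mathbb Z_{2^r}$ being well defined). *)

theory Defs
  imports Main
begin

(* Z_n is represented by the canonical residues {0..<n} in int. *)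
definition Zn2 :: "nat \<Rightarrow> (int \<times> int) set" where
  "Zn2 n = {(a, b). 0 \<le> a \<and> a < int n \<and> 0 \<le> b \<and> b < int n}"

(* A 2x2 integer matrix given by its entries m i j, i,j \<in> {0,1} *)
definition subadd_M :: "nat \<Rightarrow> nat \<Rightarrow> int" where
  "subadd_M i j = (if i = 0 \<and> j = 1 then -1 else 1)"

definition move :: "(nat \<Rightarrow> nat \<Rightarrow> int) \<Rightarrow> nat \<Rightarrow> int \<times> int \<Rightarrow> int \<times> int" where
  "move M n v = ((M 0 0 * fst v + M 0 1 * snd v) mod int n,
                 (M 1 0 * fst v + M 1 1 * snd v) mod int n)"

definition is_arc :: "(nat \<Rightarrow> nat \<Rightarrow> int) \<Rightarrow> nat \<Rightarrow> int \<times> int \<Rightarrow> int \<times> int \<Rightarrow> bool" where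
  "is_arc M n v w \<longleftrightarrow> v \<in> Zn2 n \<and> w \<in> Zn2 n \<and> w = move M n v"

definition is_parent :: "(nat \<Rightarrow> nat \<Rightarrow> int) \<Rightarrow> nat \<Rightarrow> int \<times> int \<Rightarrow> int \<times> int \<Rightarrow> bool" where
  "is_parent M n v w \<longleftrightarrow> is_arc M n v w"

definition P0 :: "nat \<Rightarrow> (int \<times> int) set" where
  "P0 r = {(x, y). (x, y) \<in> Zn2 (2 ^ r) \<and> (odd x \<noteq> odd y)}"

end

theory Submission
  imports Defs
begin

text \<open>Both coordinates of the child of (a, b) reduce to a - b and a + b, which have the
  same parity; reduction modulo an even modulus preserves parity. For r = 0 the set P0 is empty.\<close>

lemma move_subadd_M: "move subadd_M n (a, b) = ((a - b) mod int n, (a + b) mod int n)"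
  by (simp add: move_def subadd_M_def)

lemma even_mod_power_two_iff:
  fixes x :: int
  assumes "r > 0"
  shows "even (x mod 2 ^ r) \<longleftrightarrow> even x"
  using assms by (simp flip: take_bit_eq_mod add: even_take_bit_eq)

lemma even_fst_move_subadd_M_iff:
  assumes "r > 0"
  shows "even (fst (move subadd_M (2 ^ r) v)) \<longleftrightarrow> even (snd (move subadd_M (2 ^ r) v))"
proof -
  obtain a b where v: "v = (a, b)" by fastforce
  have "even (a - b) \<longleftrightarrow> even (a + b)" by simp
  then show ?thesis
    using assms by (simp add: v move_subadd_M even_mod_power_two_iff)
qed

lemma P0_0_empty: "P0 0 = {}"
  unfolding P0_def Zn2_def by (auto dest!: zless_imp_add1_zle)

theorem proposition5p3:
  fixes r :: nat
  shows "\<forall>w \<in> P0 r. \<not> (\<exists>v. is_parent subadd_M (2 ^ r) v w)"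
proof (intro ballI notI)
  fix w assume w: "w \<in> P0 r" and "\<exists>v. is_parent subadd_M (2 ^ r) v w"
  then obtain v where child: "w = move subadd_M (2 ^ r) v"
    by (auto simp: is_parent_def is_arc_def)
  have "r > 0" using w P0_0_empty by (cases r) auto
  then have "even (fst w) \<longleftrightarrow> even (snd w)"
    unfolding child by (rule even_fst_move_subadd_M_iff)
  with w show False by (auto simp: P0_def)
qed

end
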